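(* Let $k\ge 2$ and let $f\in\mathcal{GB}_n^{2^k}$ be given by $f(\mathbf{x})=g(\mathbf{x})+2h(\mathbf{x})$ with $g\in\mathcal{B}_n$ and $h\in\mathcal{GB}_n^{2^{k-1}}$. Consider the statements (i) $f$ is gbent in $\mathcal{GB}_n^{2^k}$; (ii) $h$ and $h+2^{k-2}g$ are both gbent in $\mathcal{GB}_n^{2^{k-1}}$, and $\Im\big(\overline{\mathcal{H}^{(2^{k-1})}_h(\mathbf{u})}\,\mathcal{H}^{(2^{k-1})}_{h+2^{k-2}g}(\mathbf{u})\big)=0$ for all $\mathbf{u}\in\mathbb{F}_2^n$. If $n$ is even, (i) and (ii) are equivalent. If $n$ is odd, (ii) implies (i).
   Context: $\mathcal{B}_n$: Boolean functions $\mathbb{F}_2^n\to\mathbb{F}_2$; $\mathcal{GB}_n^q$: functions $\mathbb{F}_2^n\to\mathbb{Z}_q$ (Boolean values viewed as integers; $g+2h$ computed in $\mathbb{Z}_{2^k}$, $h+2^{k-2}g$ in $\mathbb{Z}_{2^{k-1}}$). $\mathcal{H}^{(q)}_f(\mathbf{u})=\sum_{\mathbf{x}\in\mathbb{F}_2^n}\zeta_q^{f(\mathbf{x})}(-1)^{\mathbf{u}\cdot\mathbf{x}}$ with $\zeta_q=e^{2\pi i/q}$ (for $q=2$ this is the ordinary Walsh–Hadamard transform); $f\in\mathcal{GB}_n^q$ is gbent if $|\mathcal{H}^{(q)}_f(\mathbf{u})|=2^{n/2}$ for all $\mathbf{u}$ (for $q=2$: bent). $\Im(z)$ is the imaginary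 part and $\bar z$ the complex conjugate. *)

theory Defs
  imports Complex_Main
begin

text \<open>Vectors of F_2^n are represented as boolean lists of length n.\<close>
definition vecs :: "nat \<Rightarrow> bool list set" where
  "vecs n = {x. length x = n}"

text \<open>Inner product u.x in F_2, as a natural number (only its parity matters).\<close>
definition dotp :: "bool list \<Rightarrow> bool list \<Rightarrow> nat" where
  "dotp u x = length (filter id (map2 (\<and>) u x))"

definition zeta :: "nat \<Rightarrow> complex" where
  "zeta q = exp (2 * of_real pi * \<i> / of_nat q)"

definition walsh :: "nat \<Rightarrow> nat \<Rightarrow> (bool list \<Rightarrow> int) \<Rightarrow> bool list \<Rightarrow> complex" where
  "walsh n q f u = (\<Sum>x\<in>vecs n. zeta q powi f x * (-1) ^ dotp u x)"

definition gbent :: "nat \<Rightarrow> nat \<Rightarrow> (bool list \<Rightarrow> int) \<Rightarrow> bool" where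
  "gbent n q f \<longleftrightarrow> (\<forall>u\<in>vecs n. cmod (walsh n q f u) = 2 powr (real n / 2))"

end

theory Submission
  imports Defs "HOL-Computational_Algebra.Polynomial"
begin

(* Let zeta = zeta_{2^k} and omega = zeta^2 = zeta_{2^(k-1)}.  Since g takes values in {0,1},
   2 zeta^(g + 2h) = (1 + zeta) omega^h + (1 - zeta) omega^(h + 2^(k-2) g), hence
   2 H_f = (1 + zeta) H_h + (1 - zeta) H_h' with h' = h + 2^(k-2) g.  If |H_h| = |H_h'| and
   conj(H_h) H_h' is real, expanding |2 H_f|^2 gives |H_f| = |H_h|: this is (ii) => (i).

   Conversely, for n even, H_f lies in Z[zeta] and |H_f|^2 = 2^n.  In Z[zeta] the prime 2 is
   totally ramified, 2 = unit * (1 - zeta)^(2^(k-1)), so comparing (1 - zeta)-adic valuations gives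
   H_f = 2^(n/2) u with a unit u of absolute value 1 at every conjugate, i.e. a root of unity
   (Kronecker).  Since 1 and zeta are linearly independent over Z[omega], which contains H_h and
   H_h', comparing coefficients in (H_h + H_h') + zeta (H_h - H_h') = 2^(n/2+1) zeta^j yields
   H_h' = +-H_h = +-2^(n/2) omega^i, hence (ii).

   The arithmetic of Z[zeta_{2^(K+1)}] used here is derived from the Z-linear independence of
   1, zeta, ..., zeta^(2^K - 1), i.e. the irreducibility of X^(2^K) + 1, proved by induction on K:
   alpha^2 = zeta beta^2 in Z[zeta] forces beta = 0 by (1 - zeta)-adic descent. *)

lemma eq_0_if_all_2power_dvd:
  fixes c :: int
  assumes "\<And>b. 2 ^ b dvd c"
  shows "c = 0"
proof (rule ccontr)
  assume "c \<noteq> 0"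
  then have "2 ^ nat \<bar>c\<bar> \<le> \<bar>c\<bar>"
    using dvd_imp_le_int[OF _ assms] by fastforce
  moreover have "int (nat \<bar>c\<bar>) < 2 ^ nat \<bar>c\<bar>"
    using less_exp[of "nat \<bar>c\<bar>"] by (metis of_nat_less_iff of_nat_numeral of_nat_power)
  ultimately show False
    by simp
qed

lemma sum_lessThan_double_even_odd:
  fixes f :: "nat \<Rightarrow> 'a::comm_monoid_add"
  shows "(\<Sum>j<2 * n. f j) = (\<Sum>i<n. f (2 * i)) + (\<Sum>i<n. f (2 * i + 1))"
  by (induction n) (simp_all add: algebra_simps)

lemma sum_squares_eq_1_int:
  fixes c :: "'a \<Rightarrow> int"
  assumes "finite I" "(\<Sum>i\<in>I. c i ^ 2) = 1"
  obtains j where "j \<in> I" "c j = 1 \<or> c j = -1" "\<And>i. i \<in> I \<Longrightarrow> i \<noteq> j \<Longrightarrow> c i = 0"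
proof -
  obtain j where j: "j \<in> I" "c j \<noteq> 0"
    using assms(2) by (metis (mono_tags, lifting) power_zero_numeral sum.neutral zero_neq_one)
  have split: "(\<Sum>i\<in>I. c i ^ 2) = c j ^ 2 + (\<Sum>i\<in>I - {j}. c i ^ 2)"
    using assms(1) j(1) by (rule sum.remove)
  have "c j ^ 2 \<ge> 1"
    using j(2) by (simp add: int_one_le_iff_zero_less)
  moreover have "(\<Sum>i\<in>I - {j}. c i ^ 2) \<ge> 0"
    by (intro sum_nonneg) simp
  ultimately have rest: "(\<Sum>i\<in>I - {j}. c i ^ 2) = 0" and cj: "c j ^ 2 = 1"
    using split assms(2) by linarith+
  have "c i = 0" if "i \<in> I" "i \<noteq> j" for i
    using rest assms(1) that by (subst (asm) sum_nonneg_eq_0_iff) auto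
  moreover from cj have "c j = 1 \<or> c j = -1"
    by (simp add: power2_eq_1_iff)
  ultimately show ?thesis
    using j(1) that by blast
qed

section \<open>Roots of unity of order \<open>2 ^ k\<close>\<close>

definition zeta2 :: "nat \<Rightarrow> complex" where
  "zeta2 k = zeta (2 ^ k)"

lemma zeta2_power: "zeta2 k ^ j = cis (2 * pi * j / 2 ^ k)"
proof -
  have "zeta2 k = cis (2 * pi / 2 ^ k)"
    unfolding zeta2_def zeta_def cis_conv_exp by (simp add: field_simps)
  then show ?thesis by (simp add: DeMoivre field_simps)
qed

lemma zeta2_Suc_square: "zeta2 (Suc k) ^ 2 = zeta2 k"
  using zeta2_power[of k 1] by (simp add: zeta2_power field_simps)

lemma zeta2_power_2power: "zeta2 k ^ 2 ^ k = 1"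
  by (simp add: zeta2_power)

lemma zeta2_Suc_power_2power: "zeta2 (Suc k) ^ 2 ^ k = -1"
  by (simp add: zeta2_power)

lemma norm_zeta2: "cmod (zeta2 k) = 1"
  using zeta2_power[of k 1] by simp

lemma zeta2_nonzero: "zeta2 k \<noteq> 0"
  using norm_zeta2[of k] by auto

lemma cnj_zeta2: "cnj (zeta2 k) = inverse (zeta2 k)"
  using zeta2_power[of k 1] by (simp add: cis_cnj)

lemma zeta2_power_neq_1:
  assumes "0 < j" "j < 2 ^ k"
  shows "zeta2 k ^ j \<noteq> 1"
proof
  assume "zeta2 k ^ j = 1"
  then have "Re (cis (2 * pi * j / 2 ^ k)) = 1"
    by (simp add: zeta2_power)
  then have "cos (2 * pi * j / 2 ^ k) = 1"
    by simp
  then obtain i :: int where "2 * pi * j / 2 ^ k = of_int i * 2 * pi"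
    using cos_one_2pi_int by blast
  then have "real j = of_int i * 2 ^ k"
    by (simp add: field_simps)
  moreover have "0 < real j" "real j < 2 ^ k"
    using assms by simp_all
  ultimately have "0 < i" "i < 1"
    by (simp_all add: zero_less_mult_iff)
  then show False
    by simp
qed

definition ipoly :: "int poly \<Rightarrow> complex \<Rightarrow> complex" where
  "ipoly p x = poly (map_poly of_int p) x"

lemma ipoly_0 [simp]: "ipoly 0 x = 0"
  by (simp add: ipoly_def)

lemma ipoly_pCons [simp]: "ipoly (pCons a p) x = of_int a + x * ipoly p x"
  by (simp add: ipoly_def map_poly_pCons)

lemma ipoly_1 [simp]: "ipoly 1 x = 1"
  by (simp add: one_pCons)

lemma ipoly_add [simp]: "ipoly (p + q) x = ipoly p x + ipoly q x"
proof -
  have "map_poly of_int (p + q) = map_poly (of_int :: int \<Rightarrow> complex) p + map_poly of_int q"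
    by (rule poly_eqI) (simp add: coeff_map_poly)
  then show ?thesis
    by (simp add: ipoly_def)
qed

lemma ipoly_minus [simp]: "ipoly (- p) x = - ipoly p x"
  by (induction p rule: pCons_induct) (auto simp: algebra_simps)

lemma ipoly_diff [simp]: "ipoly (p - q) x = ipoly p x - ipoly q x"
  using ipoly_add[of p "- q" x] by simp

lemma ipoly_smult [simp]: "ipoly (smult c p) x = of_int c * ipoly p x"
  by (induction p rule: pCons_induct) (auto simp: algebra_simps)

lemma ipoly_mult [simp]: "ipoly (p * q) x = ipoly p x * ipoly q x"
  by (induction p rule: pCons_induct) (auto simp: algebra_simps)

lemma ipoly_power [simp]: "ipoly (p ^ n) x = ipoly p x ^ n"
  by (induction n) auto

lemma ipoly_monom [simp]: "ipoly (monom c n) x = of_int c * x ^ n"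
  by (simp add: ipoly_def map_poly_monom poly_monom)

lemma ipoly_sum: "ipoly (\<Sum>i\<in>A. p i) x = (\<Sum>i\<in>A. ipoly (p i) x)"
  by (induction A rule: infinite_finite_induct) auto

lemma ipoly_pcompose: "ipoly (pcompose p q) x = ipoly p (ipoly q x)"
  by (induction p rule: pCons_induct) (auto simp: pcompose_pCons)

lemma ipoly_cnj: "ipoly p (cnj x) = cnj (ipoly p x)"
  by (induction p rule: pCons_induct) auto

lemma ipoly_conv_sum_coeff:
  assumes "degree p < N"
  shows "ipoly p x = (\<Sum>i<N. of_int (coeff p i) * x ^ i)"
proof -
  have "ipoly p x = (\<Sum>i\<le>degree p. of_int (coeff p i) * x ^ i)"
    unfolding ipoly_def poly_altdef by (simp add: coeff_map_poly degree_map_poly)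
  also have "\<dots> = (\<Sum>i<N. of_int (coeff p i) * x ^ i)"
    using assms by (intro sum.mono_neutral_left) (auto simp: coeff_eq_0)
  finally show ?thesis .
qed

lemma monic_divmod:
  fixes f g :: "int poly"
  assumes "lead_coeff g = 1" "0 < degree g"
  obtains q r where "f = g * q + r" "degree r < degree g"
proof -
  have "g \<noteq> 0"
    using assms(2) by auto
  obtain q r where "pseudo_divmod f g = (q, r)"
    by fastforce
  with pseudo_divmod[OF \<open>g \<noteq> 0\<close> this] assms have "f = g * q + r" "r = 0 \<or> degree r < degree g"
    by auto
  with assms show ?thesis
    by (metis degree_0 that)
qed

lemma poly_pcompose_monom_at_1: "poly (pcompose p (monom 1 n)) (1::int) = poly p 1"
  by (simp add: poly_pcompose poly_monom)

section \<open>The ring \<open>\<int>[\<zeta>]\<close> for a primitive \<open>2 ^ (K + 1)\<close>-th root of unity \<open>\<zeta>\<close>\<close>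

text \<open>Equivalently, \<open>X ^ 2 ^ K + 1\<close> is the minimal polynomial of \<open>zeta2 (Suc K)\<close>.\<close>

definition powers_independent :: "nat \<Rightarrow> bool" where
  "powers_independent K \<longleftrightarrow>
     (\<forall>a :: nat \<Rightarrow> int. (\<Sum>j<2 ^ K. of_int (a j) * zeta2 (Suc K) ^ j) = 0 \<longrightarrow> (\<forall>j<2 ^ K. a j = 0))"

locale pow2_cyclotomic =
  fixes K :: nat
  assumes powers_independent: "powers_independent K"
begin

abbreviation m :: nat where "m \<equiv> 2 ^ K"
abbreviation \<zeta> :: complex where "\<zeta> \<equiv> zeta2 (Suc K)"
abbreviation \<pi> :: complex where "\<pi> \<equiv> 1 - \<zeta>"
abbreviation \<Phi> :: "int poly" where "\<Phi> \<equiv> monom 1 m + 1"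

lemma zeta_power_m: "\<zeta> ^ m = -1"
  by (rule zeta2_Suc_power_2power)

lemma zeta_power_2m: "\<zeta> ^ (2 * m) = 1"
  using zeta2_power_2power[of "Suc K"] by simp

lemma ipoly_Phi: "ipoly \<Phi> \<zeta> = 0"
  by (simp add: zeta_power_m)

lemma pi_nonzero: "\<pi> \<noteq> 0"
proof -
  have "(1::nat) < 2 ^ Suc K"
    using one_less_power[of "2::nat" "Suc K"] by simp
  then show ?thesis
    using zeta2_power_neq_1[of 1 "Suc K"] by simp
qed

lemma cnj_zeta: "cnj \<zeta> = \<zeta> ^ (2 * m - 1)"
proof -
  have "\<zeta> * \<zeta> ^ (2 * m - 1) = 1"
    using zeta_power_2m by (simp add: power_Suc[symmetric] del: power_Suc)
  then show ?thesis
    by (simp add: cnj_zeta2 inverse_unique)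
qed

lemma Phi_divmod:
  obtains q r where "p = \<Phi> * q + r" "degree r < m"
proof -
  have "lead_coeff \<Phi> = 1" "degree \<Phi> = m"
    by (simp_all add: degree_add_eq_left degree_monom_eq)
  then show ?thesis
    using monic_divmod[of \<Phi> p] that by auto
qed

lemma ipoly_eq_0_imp_eq_0:
  assumes "degree r < m" "ipoly r \<zeta> = 0"
  shows "r = 0"
proof (rule poly_eqI)
  fix j
  have "(\<Sum>i<m. of_int (coeff r i) * \<zeta> ^ i) = 0"
    using ipoly_conv_sum_coeff[OF assms(1)] assms(2) by simp
  with powers_independent have "\<forall>i<m. coeff r i = 0"
    unfolding powers_independent_def by blast
  with assms(1) show "coeff r j = coeff 0 j"
    by (cases "j < m") (auto intro: coeff_eq_0)
qed

lemma ipoly_eq_0_imp_dvd: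
  assumes "ipoly p \<zeta> = 0"
  shows "\<Phi> dvd p"
proof -
  obtain q r where qr: "p = \<Phi> * q + r" "degree r < m"
    by (rule Phi_divmod)
  then have "ipoly r \<zeta> = 0"
    using assms ipoly_Phi by simp
  with qr have "r = 0"
    using ipoly_eq_0_imp_eq_0 by blast
  with qr show ?thesis
    by simp
qed

lemma ipoly_eq_0_imp_even:
  assumes "ipoly p \<zeta> = 0"
  shows "even (poly p 1)"
proof -
  obtain q where "p = \<Phi> * q"
    using ipoly_eq_0_imp_dvd[OF assms] by blast
  then show ?thesis
    by (simp add: poly_monom)
qed

lemma ipoly_eq_0_imp_odd_power:
  assumes "odd t" "ipoly p \<zeta> = 0"
  shows "ipoly p (\<zeta> ^ t) = 0"
proof -
  obtain q where "p = \<Phi> * q"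
    using ipoly_eq_0_imp_dvd[OF assms(2)] by blast
  moreover have "(\<zeta> ^ t) ^ m = (\<zeta> ^ m) ^ t"
    by (simp only: power_mult[symmetric] mult.commute)
  then have "(\<zeta> ^ t) ^ m = -1"
    using assms(1) zeta_power_m by simp
  ultimately show ?thesis
    by simp
qed

text \<open>\<open>\<pi> = 1 - \<zeta>\<close> generates the prime of \<open>\<int>[\<zeta>]\<close> above 2, and the residue of
  \<open>p(\<zeta>)\<close> modulo it is the parity of \<open>p(1)\<close>.\<close>

lemma pi_dvd_ipoly_iff: "(\<exists>q. ipoly p \<zeta> = \<pi> * ipoly q \<zeta>) \<longleftrightarrow> even (poly p 1)"
proof
  assume "\<exists>q. ipoly p \<zeta> = \<pi> * ipoly q \<zeta>"
  then obtain q where "ipoly (p - [:1, -1:] * q) \<zeta> = 0"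
    by (auto simp: algebra_simps)
  from ipoly_eq_0_imp_even[OF this] show "even (poly p 1)"
    by simp
next
  assume "even (poly p 1)"
  then obtain t where t: "poly p 1 = 2 * t" ..
  define s where "s = synthetic_div p 1"
  have ps: "p = [:-1, 1:] * s + [:2 * t:]"
    using synthetic_div_correct'[of 1 p] t s_def by simp
  define S where "S = (\<Sum>i<m. monom 1 i :: int poly)"
  have "1 - \<zeta> ^ m = \<pi> * (\<Sum>i<m. \<zeta> ^ i)"
    by (rule one_diff_power_eq)
  then have two: "2 = \<pi> * ipoly S \<zeta>"
    using zeta_power_m by (simp add: S_def ipoly_sum)
  have "ipoly p \<zeta> = (\<zeta> - 1) * ipoly s \<zeta> + 2 * of_int t"
    by (subst ps) (simp add: algebra_simps)
  also have "\<dots> = \<pi> * ipoly (smult t S - s) \<zeta>"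
    by (subst two) (simp add: algebra_simps)
  finally show "\<exists>q. ipoly p \<zeta> = \<pi> * ipoly q \<zeta>" ..
qed

lemma pi_power_2power:
  "\<exists>y. \<pi> ^ 2 ^ r = 1 + \<zeta> ^ 2 ^ r + 2 * ipoly y \<zeta> \<and> odd (poly y 1)"
proof (induction r)
  case 0
  show ?case
    by (rule exI[of _ "[:0, -1:]"]) (simp add: algebra_simps)
next
  case (Suc r)
  then obtain y where y: "\<pi> ^ 2 ^ r = 1 + \<zeta> ^ 2 ^ r + 2 * ipoly y \<zeta>" "odd (poly y 1)"
    by blast
  define y' where "y' = monom 1 (2 ^ r) + smult 2 ((1 + monom 1 (2 ^ r)) * y) + smult 2 (y ^ 2)"
  have "\<pi> ^ 2 ^ Suc r = (\<pi> ^ 2 ^ r) ^ 2"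
    by (simp add: power_mult[symmetric] mult.commute)
  also have "\<dots> = 1 + \<zeta> ^ 2 ^ Suc r + 2 * ipoly y' \<zeta>"
    unfolding y y'_def
    by (simp add: power2_eq_square algebra_simps power_add[symmetric] mult_2[symmetric])
  finally show ?case
    using y(2) by (intro exI[of _ y']) (auto simp: y'_def poly_monom)
qed

text \<open>So \<open>2\<close> and \<open>\<pi> ^ m\<close> differ by a unit.\<close>

lemma pi_power_m: "\<exists>y. \<pi> ^ m = 2 * ipoly y \<zeta> \<and> odd (poly y 1)"
  using pi_power_2power[of K] zeta_power_m by auto

lemma eq_0_if_all_pi_powers_dvd:
  assumes "\<And>a. \<exists>q. w = \<pi> ^ a * ipoly q \<zeta>"
  shows "w = 0"
proof -
  obtain p where p: "w = ipoly p \<zeta>"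
    using assms[of 0] by auto
  obtain q0 r where qr: "p = \<Phi> * q0 + r" "degree r < m"
    by (rule Phi_divmod)
  have wr: "w = ipoly r \<zeta>"
    using p qr(1) ipoly_Phi by simp
  obtain y where y: "\<pi> ^ m = 2 * ipoly y \<zeta>"
    using pi_power_m by blast
  have "2 ^ b dvd coeff r j" for b j
  proof -
    obtain q where "w = \<pi> ^ (m * b) * ipoly q \<zeta>"
      using assms by blast
    then have w2: "w = ipoly (smult (2 ^ b) (y ^ b * q)) \<zeta>"
      by (simp add: power_mult y power_mult_distrib)
    obtain q1 s where qs: "y ^ b * q = \<Phi> * q1 + s" "degree s < m"
      by (rule Phi_divmod)
    then have "ipoly (r - smult (2 ^ b) s) \<zeta> = 0"
      using w2 wr ipoly_Phi by simp
    moreover have "degree (r - smult (2 ^ b) s) < m"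
      using qr(2) qs(2) degree_smult_le[of "2 ^ b" s] by (intro degree_diff_less) auto
    ultimately have "r = smult (2 ^ b) s"
      using ipoly_eq_0_imp_eq_0 by fastforce
    then show ?thesis
      by simp
  qed
  then have "r = 0"
    by (intro poly_eqI) (simp add: eq_0_if_all_2power_dvd)
  with wr show ?thesis
    by simp
qed

lemma pi_adic_decomposition:
  assumes "w = ipoly p \<zeta>" "w \<noteq> 0"
  obtains a u where "w = \<pi> ^ a * ipoly u \<zeta>" "odd (poly u 1)"
proof -
  let ?dvd = "\<lambda>a. \<exists>q. w = \<pi> ^ a * ipoly q \<zeta>"
  have "\<exists>a. \<not> ?dvd a"
    using eq_0_if_all_pi_powers_dvd assms(2) by blast
  define a0 where "a0 = (LEAST a. \<not> ?dvd a)"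
  have a0: "\<not> ?dvd a0"
    unfolding a0_def by (rule LeastI_ex) fact
  moreover have "?dvd 0"
    using assms(1) by auto
  ultimately obtain a where a: "a0 = Suc a"
    by (cases a0) auto
  then obtain u where u: "w = \<pi> ^ a * ipoly u \<zeta>"
    using not_less_Least[of a "\<lambda>a. \<not> ?dvd a"] unfolding a0_def by auto
  have "odd (poly u 1)"
  proof
    assume "even (poly u 1)"
    then obtain q where "ipoly u \<zeta> = \<pi> * ipoly q \<zeta>"
      using pi_dvd_ipoly_iff by blast
    with u a0 a show False
      by (auto simp: mult.assoc)
  qed
  with u that show ?thesis
    by blast
qed

text \<open>If \<open>a(1)\<close> and \<open>b(1)\<close> were both odd, then \<open>a(\<zeta>) = 1 + \<pi> X\<close>, \<open>b(\<zeta>) = 1 + \<pi> Y\<close> and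
  \<open>a(\<zeta>)\<^sup>2 - \<zeta> b(\<zeta>)\<^sup>2 = \<pi> w\<close> with \<open>w \<equiv> 1\<close> modulo \<open>\<pi>\<close>, so it could not vanish.\<close>

lemma square_eq_zeta_square_descent:
  assumes eq: "ipoly a \<zeta> ^ 2 = \<zeta> * ipoly b \<zeta> ^ 2"
  obtains a' b' where "ipoly a \<zeta> = \<pi> * ipoly a' \<zeta>" "ipoly b \<zeta> = \<pi> * ipoly b' \<zeta>"
    "ipoly a' \<zeta> ^ 2 = \<zeta> * ipoly b' \<zeta> ^ 2"
proof -
  have "ipoly (a ^ 2 - monom 1 1 * b ^ 2) \<zeta> = 0"
    using eq by simp
  from ipoly_eq_0_imp_even[OF this] have par: "even (poly a 1) \<longleftrightarrow> even (poly b 1)"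
    by (simp add: poly_monom)
  have "even (poly a 1)"
  proof (rule ccontr)
    assume "odd (poly a 1)"
    with par have "even (poly (a - 1) 1)" "even (poly (b - 1) 1)"
      by auto
    then obtain x y where "ipoly (a - 1) \<zeta> = \<pi> * ipoly x \<zeta>" "ipoly (b - 1) \<zeta> = \<pi> * ipoly y \<zeta>"
      unfolding pi_dvd_ipoly_iff[symmetric] by blast
    then have "ipoly a \<zeta> = 1 + \<pi> * ipoly x \<zeta>" "ipoly b \<zeta> = 1 + \<pi> * ipoly y \<zeta>"
      by (simp_all add: algebra_simps)
    define w where "w = 1 + smult 2 (x - y) + [:1, -1:] * (x ^ 2 - y ^ 2 + smult 2 y) + [:1, -1:] ^ 2 * y ^ 2"
    have "\<pi> * ipoly w \<zeta> = (1 + \<pi> * ipoly x \<zeta>) ^ 2 - \<zeta> * (1 + \<pi> * ipoly y \<zeta>) ^ 2"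
      by (simp add: w_def power2_eq_square algebra_simps)
    also have "\<dots> = 0"
      using eq unfolding \<open>ipoly a \<zeta> = _\<close> \<open>ipoly b \<zeta> = _\<close> by simp
    finally have "ipoly w \<zeta> = 0"
      using pi_nonzero by simp
    from ipoly_eq_0_imp_even[OF this] show False
      by (simp add: w_def)
  qed
  with par obtain a' b' where ab: "ipoly a \<zeta> = \<pi> * ipoly a' \<zeta>" "ipoly b \<zeta> = \<pi> * ipoly b' \<zeta>"
    unfolding pi_dvd_ipoly_iff[symmetric] by blast
  with eq have "\<pi> ^ 2 * ipoly a' \<zeta> ^ 2 = \<pi> ^ 2 * (\<zeta> * ipoly b' \<zeta> ^ 2)"
    by (simp add: power_mult_distrib mult.left_commute)
  then have "ipoly a' \<zeta> ^ 2 = \<zeta> * ipoly b' \<zeta> ^ 2"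
    using pi_nonzero by simp
  with ab that show ?thesis
    by blast
qed

lemma square_eq_zeta_square_imp_0:
  assumes "ipoly a \<zeta> ^ 2 = \<zeta> * ipoly b \<zeta> ^ 2"
  shows "ipoly b \<zeta> = 0"
proof (rule eq_0_if_all_pi_powers_dvd)
  fix n
  have "\<exists>a' b'. ipoly a \<zeta> = \<pi> ^ n * ipoly a' \<zeta> \<and> ipoly b \<zeta> = \<pi> ^ n * ipoly b' \<zeta> \<and>
      ipoly a' \<zeta> ^ 2 = \<zeta> * ipoly b' \<zeta> ^ 2"
  proof (induction n)
    case 0
    show ?case
      using assms by (intro exI[of _ a] exI[of _ b]) simp
  next
    case (Suc n)
    then obtain a' b' where ab: "ipoly a \<zeta> = \<pi> ^ n * ipoly a' \<zeta>" "ipoly b \<zeta> = \<pi> ^ n * ipoly b' \<zeta>"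
        "ipoly a' \<zeta> ^ 2 = \<zeta> * ipoly b' \<zeta> ^ 2"
      by blast
    obtain a'' b'' where "ipoly a' \<zeta> = \<pi> * ipoly a'' \<zeta>" "ipoly b' \<zeta> = \<pi> * ipoly b'' \<zeta>"
        "ipoly a'' \<zeta> ^ 2 = \<zeta> * ipoly b'' \<zeta> ^ 2"
      using square_eq_zeta_square_descent[OF ab(3)] .
    with ab show ?case
      by (intro exI[of _ a''] exI[of _ b'']) (simp add: mult.assoc)
  qed
  then show "\<exists>q. ipoly b \<zeta> = \<pi> ^ n * ipoly q \<zeta>"
    by blast
qed

lemma sqrt_zeta_independent:
  assumes "ipoly a \<zeta> + zeta2 (Suc (Suc K)) * ipoly b \<zeta> = 0"
  shows "ipoly a \<zeta> = 0" "ipoly b \<zeta> = 0"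
proof -
  have "ipoly a \<zeta> = - zeta2 (Suc (Suc K)) * ipoly b \<zeta>"
    using assms by (simp add: eq_neg_iff_add_eq_0)
  then have "ipoly a \<zeta> ^ 2 = \<zeta> * ipoly b \<zeta> ^ 2"
    by (simp add: power_mult_distrib zeta2_Suc_square)
  then show "ipoly b \<zeta> = 0"
    by (rule square_eq_zeta_square_imp_0)
  with assms show "ipoly a \<zeta> = 0"
    by simp
qed

lemma powers_independent_Suc: "powers_independent (Suc K)"
  unfolding powers_independent_def
proof (rule allI, rule impI)
  fix a :: "nat \<Rightarrow> int"
  let ?\<omega> = "zeta2 (Suc (Suc K))"
  assume sum0: "(\<Sum>j<2 ^ Suc K. of_int (a j) * ?\<omega> ^ j) = 0"
  define \<alpha> where "\<alpha> = (\<Sum>i<m. of_int (a (2 * i)) * \<zeta> ^ i)"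
  define \<beta> where "\<beta> = (\<Sum>i<m. of_int (a (2 * i + 1)) * \<zeta> ^ i)"
  have \<omega>_even: "?\<omega> ^ (2 * i) = \<zeta> ^ i" for i
    by (simp add: power_mult zeta2_Suc_square)
  then have \<omega>_odd: "?\<omega> ^ (2 * i + 1) = ?\<omega> * \<zeta> ^ i" for i
    by simp
  have "(\<Sum>j<2 ^ Suc K. of_int (a j) * ?\<omega> ^ j) =
      (\<Sum>i<m. of_int (a (2 * i)) * ?\<omega> ^ (2 * i)) + (\<Sum>i<m. of_int (a (2 * i + 1)) * ?\<omega> ^ (2 * i + 1))"
    by (simp only: power_Suc) (rule sum_lessThan_double_even_odd)
  also have "\<dots> = \<alpha> + ?\<omega> * \<beta>"
    unfolding \<alpha>_def \<beta>_def \<omega>_even \<omega>_odd by (simp add: sum_distrib_left algebra_simps)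
  finally have "\<alpha> + ?\<omega> * \<beta> = 0"
    using sum0 by simp
  moreover have "\<alpha> = ipoly (\<Sum>i<m. monom (a (2 * i)) i) \<zeta>" "\<beta> = ipoly (\<Sum>i<m. monom (a (2 * i + 1)) i) \<zeta>"
    unfolding \<alpha>_def \<beta>_def by (simp_all add: ipoly_sum)
  ultimately have "\<alpha> = 0" "\<beta> = 0"
    using sqrt_zeta_independent by metis+
  then have even: "\<forall>i<m. a (2 * i) = 0" and odd: "\<forall>i<m. a (2 * i + 1) = 0"
    using powers_independent[unfolded powers_independent_def, rule_format, of "\<lambda>i. a (2 * i)"]
      powers_independent[unfolded powers_independent_def, rule_format, of "\<lambda>i. a (2 * i + 1)"]
    unfolding \<alpha>_def \<beta>_def by simp_all
  show "\<forall>j<2 ^ Suc K. a j = 0"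
  proof (intro allI impI)
    fix j :: nat
    assume "j < 2 ^ Suc K"
    then have "j div 2 < m"
      by simp
    moreover have "j = 2 * (j div 2) + j mod 2"
      by simp
    ultimately show "a j = 0"
      using even odd by (metis mod2_eq_if add_0_right)
  qed
qed

end

lemma powers_independent_all: "powers_independent K"
proof (induction K)
  case 0
  show ?case
    unfolding powers_independent_def by simp
next
  case (Suc K)
  then interpret pow2_cyclotomic K
    by unfold_locales
  show ?case
    by (rule powers_independent_Suc)
qed

section \<open>Elements of norm \<open>1\<close> and of norm \<open>2 ^ n\<close>\<close>

context pow2_cyclotomic
begin

lemma cnj_ipoly: "cnj (ipoly p \<zeta>) = ipoly (pcompose p (monom 1 (2 * m - 1))) \<zeta>"
  by (simp add: ipoly_cnj[symmetric] ipoly_pcompose cnj_zeta)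

lemma cnj_pi: "cnj \<pi> = - (\<zeta> ^ (2 * m - 1)) * \<pi>"
proof -
  have "\<zeta> ^ (2 * m - 1) * \<zeta> = 1"
    using zeta_power_2m by (simp add: power_Suc2[symmetric])
  then show ?thesis
    by (simp add: cnj_zeta algebra_simps)
qed

lemma zeta_powi_neq_1:
  assumes "e \<noteq> 0" "\<bar>e\<bar> < 2 * int m"
  shows "\<zeta> powi e \<noteq> 1"
proof
  assume "\<zeta> powi e = 1"
  then have "\<zeta> ^ nat \<bar>e\<bar> = 1"
    using zeta2_nonzero[of "Suc K"] by (cases "e \<ge> 0") (auto simp: power_int_def power_inverse)
  moreover have "0 < nat \<bar>e\<bar>" "nat \<bar>e\<bar> < 2 ^ Suc K"
    using assms by (auto simp: nat_less_iff)
  ultimately show False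
    using zeta2_power_neq_1 by blast
qed

text \<open>The \<open>\<zeta> ^ (2 s + 1)\<close>, \<open>s < m\<close>, are the Galois conjugates of \<open>\<zeta>\<close>; this is the orthogonality
  of the characters \<open>x \<mapsto> x\<^sup>i\<close> on them.\<close>

lemma sum_conjugates_orthogonal:
  assumes "i < m" "j < m"
  shows "(\<Sum>s<m. (\<zeta> ^ (2 * s + 1)) ^ i * cnj (\<zeta> ^ (2 * s + 1)) ^ j) = (if i = j then of_nat m else 0)"
proof -
  define e where "e = int i - int j"
  have summand: "(\<zeta> ^ (2 * s + 1)) ^ i * cnj (\<zeta> ^ (2 * s + 1)) ^ j = \<zeta> powi e * (\<zeta> powi (2 * e)) ^ s" for s
  proof -
    have "x ^ a * inverse x ^ b = x powi (int a - int b)" if "x \<noteq> 0" for x :: complex and a b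
      using that by (simp add: power_int_diff power_inverse divide_inverse)
    moreover have "(\<zeta> ^ (2 * s + 1)) ^ i * cnj (\<zeta> ^ (2 * s + 1)) ^ j =
        \<zeta> ^ ((2 * s + 1) * i) * inverse \<zeta> ^ ((2 * s + 1) * j)"
      by (simp only: power_mult complex_cnj_power cnj_zeta2)
    ultimately have "(\<zeta> ^ (2 * s + 1)) ^ i * cnj (\<zeta> ^ (2 * s + 1)) ^ j =
        \<zeta> powi (int ((2 * s + 1) * i) - int ((2 * s + 1) * j))"
      using zeta2_nonzero[of "Suc K"] by simp
    also have "int ((2 * s + 1) * i) - int ((2 * s + 1) * j) = e + (2 * e) * int s"
      unfolding e_def by (simp add: algebra_simps)
    finally show ?thesis
      using zeta2_nonzero[of "Suc K"] by (simp add: power_int_add power_int_mult)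
  qed
  show ?thesis
  proof (cases "i = j")
    case True
    then show ?thesis
      unfolding summand by (simp add: e_def)
  next
    case False
    have "(\<zeta> powi (2 * e)) ^ m = \<zeta> powi (2 * e * int m)"
      by (simp only: power_int_of_nat[symmetric] power_int_mult)
    also have "\<dots> = (\<zeta> powi int (2 * m)) powi e"
      by (simp add: power_int_mult[symmetric] algebra_simps)
    also have "\<dots> = 1"
      by (simp only: power_int_of_nat zeta_power_2m power_int_1_left)
    finally have "(\<zeta> powi (2 * e)) ^ m = 1" .
    moreover have "2 * e \<noteq> 0"
      using False by (simp add: e_def)
    moreover have "int i < int m" "int j < int m"
      using assms by (simp_all only: of_nat_less_iff)
    then have "\<bar>2 * e\<bar> < 2 * int m"
      unfolding e_def by arith
    ultimately have "(\<Sum>s<m. (\<zeta> powi (2 * e)) ^ s) = 0"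
      using zeta_powi_neq_1 by (simp add: sum_gp_strict)
    with False show ?thesis
      unfolding summand by (simp add: sum_distrib_left[symmetric])
  qed
qed

lemma sum_conjugates_norm_square:
  assumes "degree r < m"
  shows "(\<Sum>s<m. ipoly r (\<zeta> ^ (2 * s + 1)) * cnj (ipoly r (\<zeta> ^ (2 * s + 1)))) =
    of_nat m * of_int (\<Sum>i<m. coeff r i ^ 2)"
proof -
  let ?x = "\<lambda>s. \<zeta> ^ (2 * s + 1)"
  let ?c = "\<lambda>i. of_int (coeff r i) :: complex"
  have "(\<Sum>s<m. ipoly r (?x s) * cnj (ipoly r (?x s))) =
      (\<Sum>s<m. \<Sum>i<m. \<Sum>j<m. ?c i * ?c j * ((?x s) ^ i * cnj (?x s) ^ j))"
  proof (rule sum.cong[OF refl])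
    fix s
    have "ipoly r (?x s) * cnj (ipoly r (?x s)) = ipoly r (?x s) * ipoly r (cnj (?x s))"
      by (simp only: ipoly_cnj)
    also have "\<dots> = (\<Sum>i<m. ?c i * (?x s) ^ i) * (\<Sum>j<m. ?c j * (cnj (?x s)) ^ j)"
      using ipoly_conv_sum_coeff[OF assms] by simp
    finally show "ipoly r (?x s) * cnj (ipoly r (?x s)) =
        (\<Sum>i<m. \<Sum>j<m. ?c i * ?c j * ((?x s) ^ i * cnj (?x s) ^ j))"
      by (simp add: sum_product algebra_simps)
  qed
  also have "\<dots> = (\<Sum>i<m. \<Sum>j<m. ?c i * ?c j * (\<Sum>s<m. (?x s) ^ i * cnj (?x s) ^ j))"
    by (subst sum.swap, rule sum.cong[OF refl], subst sum.swap) (simp add: sum_distrib_left)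
  also have "\<dots> = (\<Sum>i<m. \<Sum>j<m. ?c i * ?c j * (if i = j then of_nat m else 0))"
  proof (intro sum.cong refl)
    fix i j
    assume "i \<in> {..<m}" "j \<in> {..<m}"
    then show "?c i * ?c j * (\<Sum>s<m. (?x s) ^ i * cnj (?x s) ^ j) =
        ?c i * ?c j * (if i = j then of_nat m else 0)"
      by (simp only: lessThan_iff sum_conjugates_orthogonal)
  qed
  also have "\<dots> = of_nat m * of_int (\<Sum>i<m. coeff r i ^ 2)"
    by (simp add: if_distrib sum_distrib_left power2_eq_square algebra_simps cong: if_cong)
  finally show ?thesis .
qed

text \<open>A relation \<open>p(\<zeta>) = 0\<close> is inherited by every conjugate \<open>\<zeta>\<^sup>t\<close>, \<open>t\<close> odd, and complex
  conjugation on \<open>\<int>[\<zeta>]\<close> is the substitution \<open>\<zeta> \<mapsto> \<zeta>\<^sup>2\<^sup>m\<^sup>-\<^sup>1\<close>.\<close>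

lemma norm_1_at_conjugates:
  assumes "ipoly r \<zeta> * cnj (ipoly r \<zeta>) = 1" "odd t"
  shows "ipoly r (\<zeta> ^ t) * cnj (ipoly r (\<zeta> ^ t)) = 1"
proof -
  define r' where "r' = pcompose r (monom 1 (2 * m - 1))"
  have "ipoly (r * r' - 1) \<zeta> = 0"
    using assms(1) by (simp add: r'_def cnj_ipoly)
  from ipoly_eq_0_imp_odd_power[OF assms(2) this] have "ipoly r (\<zeta> ^ t) * ipoly r' (\<zeta> ^ t) = 1"
    by simp
  moreover have "ipoly r' (\<zeta> ^ t) = ipoly r ((\<zeta> ^ t) ^ (2 * m - 1))"
    by (simp add: r'_def ipoly_pcompose)
  also have "(\<zeta> ^ t) ^ (2 * m - 1) = cnj (\<zeta> ^ t)"
    by (simp add: cnj_zeta power_mult[symmetric] mult.commute)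
  also have "ipoly r (cnj (\<zeta> ^ t)) = cnj (ipoly r (\<zeta> ^ t))"
    by (rule ipoly_cnj)
  ultimately show ?thesis
    by simp
qed

text \<open>Kronecker: a unit all of whose conjugates have absolute value 1 is a root of unity;
  here the conjugates' norms sum to \<open>m\<close> times the sum of squared coefficients.\<close>

lemma norm_1_imp_root_of_unity:
  assumes "w = ipoly p \<zeta>" "w * cnj w = 1"
  shows "\<exists>j. w = \<zeta> ^ j"
proof -
  obtain q r where qr: "p = \<Phi> * q + r" "degree r < m"
    by (rule Phi_divmod)
  have w: "w = ipoly r \<zeta>"
    using assms(1) qr(1) ipoly_Phi by simp
  have "of_nat m * of_int (\<Sum>i<m. coeff r i ^ 2) =
      (\<Sum>s<m. ipoly r (\<zeta> ^ (2 * s + 1)) * cnj (ipoly r (\<zeta> ^ (2 * s + 1))))"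
    using sum_conjugates_norm_square[OF qr(2)] ..
  also have "\<dots> = (\<Sum>s<m. 1)"
    by (intro sum.cong refl norm_1_at_conjugates) (use assms(2) w in auto)
  also have "\<dots> = of_nat m"
    by simp
  finally have "of_int (\<Sum>i<m. coeff r i ^ 2) = (1 :: complex)"
    by simp
  then have "(\<Sum>i<m. coeff r i ^ 2) = 1"
    by (simp only: of_int_eq_1_iff)
  then obtain j where j: "j < m" "coeff r j = 1 \<or> coeff r j = -1"
      "\<And>i. i < m \<Longrightarrow> i \<noteq> j \<Longrightarrow> coeff r i = 0"
    by (rule sum_squares_eq_1_int[OF finite_lessThan]) auto
  have "w = (\<Sum>i<m. of_int (coeff r i) * \<zeta> ^ i)"
    using w ipoly_conv_sum_coeff[OF qr(2)] by simp
  also have "\<dots> = of_int (coeff r j) * \<zeta> ^ j"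
    using j by (subst sum.remove[of _ j]) (auto intro: sum.neutral)
  finally have "w = of_int (coeff r j) * \<zeta> ^ j" .
  with j(2) have "w = \<zeta> ^ j \<or> w = \<zeta> ^ (j + m)"
    by (auto simp: power_add zeta_power_m)
  then show ?thesis
    by blast
qed

lemma pi_power_cancel:
  assumes "\<pi> ^ a * ipoly v \<zeta> = \<pi> ^ b" "odd (poly v 1)"
  shows "a = b"
proof (rule ccontr)
  assume "a \<noteq> b"
  then consider "a < b" | "b < a"
    by linarith
  then show False
  proof cases
    case 1
    then obtain d where "b = Suc (a + d)"
      using less_iff_Suc_add by auto
    with assms(1) have "\<pi> ^ a * ipoly v \<zeta> = \<pi> ^ a * (\<pi> * \<pi> ^ d)"
      by (simp add: power_add)
    then have "ipoly v \<zeta> = \<pi> * ipoly ([:1, -1:] ^ d) \<zeta>"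
      using pi_nonzero by simp
    with assms(2) show False
      using pi_dvd_ipoly_iff by blast
  next
    case 2
    then obtain d where "a = Suc (b + d)"
      using less_iff_Suc_add by auto
    with assms(1) have "\<pi> ^ b * (\<pi> * \<pi> ^ d * ipoly v \<zeta>) = \<pi> ^ b * 1"
      by (simp add: power_add mult.assoc)
    then have "ipoly 1 \<zeta> = \<pi> * ipoly ([:1, -1:] ^ d * v) \<zeta>"
      using pi_nonzero by (simp add: mult.assoc)
    then have "even (poly (1 :: int poly) 1)"
      unfolding pi_dvd_ipoly_iff[symmetric] by blast
    then show False
      by simp
  qed
qed

lemma norm_square_pi_adic:
  assumes "w = \<pi> ^ a * ipoly u \<zeta>" "odd (poly u 1)"
  obtains v where "w * cnj w = \<pi> ^ (2 * a) * ipoly v \<zeta>" "odd (poly v 1)"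
proof -
  define u' where "u' = pcompose u (monom 1 (2 * m - 1))"
  define v where "v = u * u' * (- monom 1 (2 * m - 1)) ^ a"
  have "cnj w = cnj \<pi> ^ a * cnj (ipoly u \<zeta>)"
    using assms(1) by (simp only: complex_cnj_mult complex_cnj_power)
  also have "\<dots> = (- (\<zeta> ^ (2 * m - 1))) ^ a * \<pi> ^ a * ipoly u' \<zeta>"
    by (simp only: cnj_pi u'_def cnj_ipoly power_mult_distrib)
  finally have cnj_w: "cnj w = (- (\<zeta> ^ (2 * m - 1))) ^ a * \<pi> ^ a * ipoly u' \<zeta>" .
  have "w * cnj w = (\<pi> ^ a * ipoly u \<zeta>) * ((- (\<zeta> ^ (2 * m - 1))) ^ a * \<pi> ^ a * ipoly u' \<zeta>)"
    unfolding cnj_w by (simp only: assms(1))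
  also have "\<dots> = \<pi> ^ (2 * a) * ipoly v \<zeta>"
    by (simp only: mult_2[of a] power_add) (simp add: v_def ac_simps)
  finally have "w * cnj w = \<pi> ^ (2 * a) * ipoly v \<zeta>" .
  moreover have "odd (poly v 1)"
    using assms(2) by (simp add: v_def u'_def poly_pcompose_monom_at_1 poly_monom)
  ultimately show ?thesis
    using that by blast
qed

text \<open>Since \<open>2\<close> is \<open>\<pi> ^ m\<close> up to a unit, \<open>\<bar>w\<bar>\<^sup>2 = 2\<^sup>n\<close> pins down the \<open>\<pi>\<close>-adic valuation of \<open>w\<close>
  to \<open>m n / 2\<close>, leaving a unit of absolute value 1.\<close>

lemma norm_square_2power_imp:
  assumes "w = ipoly p \<zeta>" "w * cnj w = 2 ^ n" "even n"
  shows "\<exists>j. w = 2 ^ (n div 2) * \<zeta> ^ j"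
proof -
  have "w \<noteq> 0"
    using assms(2) by auto
  with assms(1) obtain a u where au: "w = \<pi> ^ a * ipoly u \<zeta>" "odd (poly u 1)"
    by (rule pi_adic_decomposition)
  then obtain v where v: "w * cnj w = \<pi> ^ (2 * a) * ipoly v \<zeta>" "odd (poly v 1)"
    by (rule norm_square_pi_adic)
  obtain y where y: "\<pi> ^ m = 2 * ipoly y \<zeta>" "odd (poly y 1)"
    using pi_power_m by blast
  have "\<pi> ^ (2 * a) * ipoly (v * y ^ n) \<zeta> = \<pi> ^ (m * n)"
    using v(1) assms(2) by (simp add: power_mult y(1) power_mult_distrib mult.assoc)
  moreover have "odd (poly (v * y ^ n) 1)"
    using v(2) y(2) by simp
  ultimately have "2 * a = m * n"
    by (rule pi_power_cancel)
  with assms(3) have a: "a = m * (n div 2)"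
    by (auto elim!: evenE)
  define G where "G = ipoly (y ^ (n div 2) * u) \<zeta>"
  have wG: "w = 2 ^ (n div 2) * G"
    using au(1) a y(1) by (simp add: G_def power_mult power_mult_distrib)
  have "(2 :: complex) ^ n = 2 ^ (n div 2) * 2 ^ (n div 2)"
    using assms(3) by (metis even_two_times_div_two mult_2 power_add)
  with assms(2) wG have "2 ^ n * (G * cnj G) = 2 ^ n * 1"
    by (simp add: ac_simps)
  then have "G * cnj G = 1"
    by simp
  then obtain j where "G = \<zeta> ^ j"
    using norm_1_imp_root_of_unity G_def by blast
  with wG show ?thesis
    by blast
qed

end

section \<open>Walsh transforms\<close>

lemma zeta2_powi_mod: "zeta2 k powi (a mod 2 ^ k) = zeta2 k powi a"
proof -
  have "zeta2 k powi a = zeta2 k powi (2 ^ k * (a div 2 ^ k)) * zeta2 k powi (a mod 2 ^ k)"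
    using zeta2_nonzero by (simp flip: power_int_add)
  also have "zeta2 k powi (2 ^ k * (a div 2 ^ k)) = 1"
    using zeta2_power_2power[of k] by (simp add: power_int_mult flip: power_int_of_nat)
  finally show ?thesis
    by simp
qed

lemma walsh_eq_ipoly:
  assumes "\<forall>x\<in>vecs n. 0 \<le> f x"
  shows "\<exists>p. walsh n q f u = ipoly p (zeta q)"
proof -
  have "walsh n q f u = (\<Sum>x\<in>vecs n. ipoly (monom ((-1) ^ dotp u x) (nat (f x))) (zeta q))"
    unfolding walsh_def using assms by (intro sum.cong refl) (simp add: power_int_def)
  also have "\<dots> = ipoly (\<Sum>x\<in>vecs n. monom ((-1) ^ dotp u x) (nat (f x))) (zeta q)"
    by (rule ipoly_sum[symmetric])
  finally show ?thesis ..
qed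

text \<open>For \<open>g \<in> {0, 1}\<close>: \<open>2 \<zeta>\<^sup>g = (1 + \<zeta>) + (1 - \<zeta>) (-1)\<^sup>g\<close>, with \<open>-1 = \<omega> ^ 2\<^sup>K\<close>.\<close>

lemma zeta2_power_split:
  fixes g h :: int
  assumes "g \<in> {0, 1}"
  shows "2 * zeta2 (Suc (Suc K)) powi (g + 2 * h) =
    (1 + zeta2 (Suc (Suc K))) * zeta2 (Suc K) powi h +
    (1 - zeta2 (Suc (Suc K))) * zeta2 (Suc K) powi (h + 2 ^ K * g)"
proof -
  let ?\<zeta> = "zeta2 (Suc (Suc K))" and ?\<omega> = "zeta2 (Suc K)"
  have "?\<zeta> powi (g + 2 * h) = ?\<zeta> powi g * ?\<omega> powi h"
    using zeta2_nonzero by (simp add: power_int_add power_int_mult zeta2_Suc_square)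
  moreover have "?\<omega> powi (h + 2 ^ K * g) = ?\<omega> powi h * (-1) powi g"
    using zeta2_nonzero zeta2_Suc_power_2power[of K]
    by (simp add: power_int_add power_int_mult flip: power_int_of_nat)
  ultimately show ?thesis
    using assms by (auto simp: algebra_simps)
qed

lemma walsh_split:
  fixes f g h :: "bool list \<Rightarrow> int"
  assumes g: "\<forall>x\<in>vecs n. g x \<in> {0, 1}"
    and f: "\<forall>x\<in>vecs n. f x = (g x + 2 * h x) mod 2 ^ Suc (Suc K)"
  shows "2 * walsh n (2 ^ Suc (Suc K)) f u =
    (1 + zeta2 (Suc (Suc K))) * walsh n (2 ^ Suc K) h u +
    (1 - zeta2 (Suc (Suc K))) * walsh n (2 ^ Suc K) (\<lambda>x. (h x + 2 ^ K * g x) mod 2 ^ Suc K) u"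
proof -
  let ?\<zeta> = "zeta2 (Suc (Suc K))" and ?\<omega> = "zeta2 (Suc K)"
  have pointwise: "2 * ?\<zeta> powi f x =
      (1 + ?\<zeta>) * ?\<omega> powi h x + (1 - ?\<zeta>) * ?\<omega> powi ((h x + 2 ^ K * g x) mod 2 ^ Suc K)"
    if "x \<in> vecs n" for x
  proof -
    have "?\<zeta> powi f x = ?\<zeta> powi (g x + 2 * h x)"
      unfolding f[rule_format, OF that] by (rule zeta2_powi_mod)
    with g that show ?thesis
      unfolding zeta2_powi_mod by (simp add: zeta2_power_split)
  qed
  have "2 * walsh n (2 ^ Suc (Suc K)) f u = (\<Sum>x\<in>vecs n. 2 * ?\<zeta> powi f x * (-1) ^ dotp u x)"
    unfolding walsh_def zeta2_def[symmetric] by (simp add: sum_distrib_left mult.assoc)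
  also have "\<dots> = (\<Sum>x\<in>vecs n. (1 + ?\<zeta>) * (?\<omega> powi h x * (-1) ^ dotp u x) +
      (1 - ?\<zeta>) * (?\<omega> powi ((h x + 2 ^ K * g x) mod 2 ^ Suc K) * (-1) ^ dotp u x))"
    by (intro sum.cong refl) (simp add: pointwise algebra_simps)
  finally show ?thesis
    unfolding walsh_def zeta2_def[symmetric] by (simp only: sum.distrib sum_distrib_left)
qed

lemma norm_split_combination:
  fixes \<xi> A B F :: complex
  assumes "cmod \<xi> = 1" "2 * F = (1 + \<xi>) * A + (1 - \<xi>) * B"
    and "cmod A = r" "cmod B = r" "Im (cnj A * B) = 0"
  shows "cmod F = r"
proof -
  have \<xi>: "\<xi> * cnj \<xi> = 1"
    using assms(1) by (simp add: complex_norm_square[symmetric])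
  have AB: "A * cnj B = cnj A * B"
    using assms(5) by (simp add: complex_eq_iff algebra_simps)
  have A: "A * cnj A = of_real (r ^ 2)" and B: "B * cnj B = of_real (r ^ 2)"
    using assms(3,4) complex_norm_square[of A] complex_norm_square[of B] by simp_all
  have "4 * (F * cnj F) = (2 * F) * cnj (2 * F)"
    by simp
  also have "\<dots> = (1 + \<xi>) * (1 + cnj \<xi>) * (A * cnj A) + (1 + \<xi>) * (1 - cnj \<xi>) * (A * cnj B)
      + (1 - \<xi>) * (1 + cnj \<xi>) * (cnj A * B) + (1 - \<xi>) * (1 - cnj \<xi>) * (B * cnj B)"
    unfolding assms(2) by (simp add: algebra_simps)
  also have "\<dots> = (2 + 2 * (\<xi> * cnj \<xi>)) * of_real (r ^ 2) + (2 - 2 * (\<xi> * cnj \<xi>)) * (cnj A * B)"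
    unfolding A B AB by (simp add: algebra_simps)
  also have "\<dots> = 4 * of_real (r ^ 2)"
    unfolding \<xi> by simp
  finally have "of_real (cmod F ^ 2) = (of_real (r ^ 2) :: complex)"
    using complex_norm_square[of F] by simp
  then have "cmod F ^ 2 = r ^ 2"
    by (simp only: of_real_eq_iff)
  then show ?thesis
    using assms(3) by (metis norm_ge_zero power2_eq_iff_nonneg)
qed

text \<open>Comparing \<open>(A + B) + \<zeta> (A - B) = 2 F\<close> with \<open>F = 2\<^sup>n\<^sup>/\<^sup>2 \<zeta>\<^sup>j\<close>, in which \<open>\<zeta> ^ j\<close> is
  \<open>\<omega>\<^sup>i\<close> or \<open>\<zeta> \<omega>\<^sup>i\<close>, uses that \<open>1, \<zeta>\<close> are independent over \<open>\<int>[\<omega>]\<close>.\<close>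

lemma split_of_2power_norm:
  fixes K n :: nat and A B F :: complex
  defines "\<zeta> \<equiv> zeta2 (Suc (Suc K))" and "\<omega> \<equiv> zeta2 (Suc K)"
  assumes split: "2 * F = (1 + \<zeta>) * A + (1 - \<zeta>) * B"
    and ring: "F = ipoly p \<zeta>" "A = ipoly a \<omega>" "B = ipoly b \<omega>"
    and norm: "even n" "F * cnj F = 2 ^ n"
  obtains i where "A = 2 ^ (n div 2) * \<omega> ^ i" "B = A \<or> B = - A"
proof -
  interpret L0: pow2_cyclotomic K
    by unfold_locales (rule powers_independent_all)
  interpret L1: pow2_cyclotomic "Suc K"
    by unfold_locales (rule powers_independent_all)
  define N where "N = (2 :: complex) ^ (n div 2)"
  obtain j where "F = N * \<zeta> ^ j"
    using L1.norm_square_2power_imp[OF _ norm(2,1)] ring(1) unfolding N_def \<zeta>_def by blast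
  with split have sum: "(A + B) + \<zeta> * (A - B) = 2 * N * \<zeta> ^ j"
    by (simp add: algebra_simps)
  have \<omega>: "\<zeta> ^ (2 * i) = \<omega> ^ i" for i
    by (simp add: \<zeta>_def \<omega>_def power_mult zeta2_Suc_square)
  define c :: "nat \<Rightarrow> int poly" where "c i = smult (2 * 2 ^ (n div 2)) (monom 1 i)" for i
  have c: "ipoly (c i) \<omega> = 2 * N * \<omega> ^ i" for i
    by (simp add: c_def N_def)
  show ?thesis
  proof (cases "even j")
    case True
    then obtain i where "j = 2 * i" ..
    with sum \<omega> ring(2,3) have "ipoly (a + b - c i) \<omega> + \<zeta> * ipoly (a - b) \<omega> = 0"
      by (simp add: c algebra_simps)
    then have "A + B = 2 * N * \<omega> ^ i" "A = B"
      using L0.sqrt_zeta_independent[of "a + b - c i" "a - b"] c ring(2,3)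
      unfolding \<zeta>_def \<omega>_def by simp_all
    then show ?thesis
      using that[of i] by (simp add: N_def)
  next
    case False
    then obtain i where "j = 2 * i + 1"
      using oddE by blast
    with sum \<omega> ring(2,3) have "ipoly (a + b) \<omega> + \<zeta> * ipoly (a - b - c i) \<omega> = 0"
      by (simp add: c algebra_simps)
    then have "A + B = 0" and diff: "A - B = 2 * N * \<omega> ^ i"
      using L0.sqrt_zeta_independent[of "a + b" "a - b - c i"] c ring(2,3)
      unfolding \<zeta>_def \<omega>_def by simp_all
    then have B: "B = - A"
      by (simp add: eq_neg_iff_add_eq_0 add.commute)
    then have "A = (A - B) / 2"
      by (simp add: field_simps)
    also have "\<dots> = N * \<omega> ^ i"
      using diff by simp
    finally show ?thesis
      using B that[of i] by (simp add: N_def)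
  qed
qed

lemma split_norms_of_2power_norm:
  fixes K n :: nat and A B F :: complex
  defines "\<zeta> \<equiv> zeta2 (Suc (Suc K))" and "\<omega> \<equiv> zeta2 (Suc K)"
  assumes split: "2 * F = (1 + \<zeta>) * A + (1 - \<zeta>) * B"
    and ring: "F = ipoly p \<zeta>" "A = ipoly a \<omega>" "B = ipoly b \<omega>"
    and norm: "cmod F = 2 powr (real n / 2)" "even n"
  shows "cmod A = 2 powr (real n / 2)" "cmod B = 2 powr (real n / 2)" "Im (cnj A * B) = 0"
proof -
  have N: "2 powr (real n / 2) = 2 ^ (n div 2)"
    using norm(2) by (auto elim!: evenE simp: powr_realpow)
  have "F * cnj F = of_real (cmod F ^ 2)"
    by (rule complex_norm_square[symmetric])
  also have "\<dots> = 2 ^ n"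
    using norm by (auto elim!: evenE simp: N power_even_eq)
  finally have "F * cnj F = 2 ^ n" .
  with split ring norm(2) obtain i where A: "A = 2 ^ (n div 2) * \<omega> ^ i" and B: "B = A \<or> B = - A"
    unfolding \<zeta>_def \<omega>_def by (rule split_of_2power_norm)
  show "cmod A = 2 powr (real n / 2)"
    using A by (simp add: N \<omega>_def norm_mult norm_power norm_zeta2)
  with B show "cmod B = 2 powr (real n / 2)"
    by auto
  from B show "Im (cnj A * B) = 0"
    by auto
qed

theorem mainTheorem14:
  fixes n k :: nat and f g h :: "bool list \<Rightarrow> int"
  assumes k: "k \<ge> 2"
    and g: "\<forall>x\<in>vecs n. g x \<in> {0, 1}"
    and h: "\<forall>x\<in>vecs n. h x \<in> {0..<2 ^ (k - 1)}"
    and f: "\<forall>x\<in>vecs n. f x = (g x + 2 * h x) mod 2 ^ k"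
  defines "hg \<equiv> (\<lambda>x. (h x + 2 ^ (k - 2) * g x) mod 2 ^ (k - 1))"
  defines "ii \<equiv> gbent n (2 ^ (k - 1)) h \<and> gbent n (2 ^ (k - 1)) hg \<and>
      (\<forall>u\<in>vecs n. Im (cnj (walsh n (2 ^ (k - 1)) h u) * walsh n (2 ^ (k - 1)) hg u) = 0)"
  shows "(even n \<longrightarrow> (gbent n (2 ^ k) f \<longleftrightarrow> ii)) \<and> (odd n \<longrightarrow> (ii \<longrightarrow> gbent n (2 ^ k) f))"
proof -
  define K where "K = k - 2"
  have kK: "k = Suc (Suc K)"
    using k by (simp add: K_def)
  let ?F = "walsh n (2 ^ k) f" and ?A = "walsh n (2 ^ (k - 1)) h" and ?B = "walsh n (2 ^ (k - 1)) hg"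
  have split: "2 * ?F u = (1 + zeta2 k) * ?A u + (1 - zeta2 k) * ?B u" for u
    using walsh_split[OF g] f unfolding hg_def kK by simp
  have "gbent n (2 ^ k) f" if ii
    using that norm_split_combination[OF norm_zeta2 split] unfolding ii_def gbent_def by blast
  moreover have ii if "even n" "gbent n (2 ^ k) f"
  proof -
    have "\<exists>p. ?F u = ipoly p (zeta2 k)" "\<exists>p. ?A u = ipoly p (zeta2 (Suc K))"
      "\<exists>p. ?B u = ipoly p (zeta2 (Suc K))" for u
      using f h by (auto simp: hg_def kK zeta2_def intro!: walsh_eq_ipoly)
    with split that show ii
      unfolding ii_def gbent_def kK by (metis split_norms_of_2power_norm)
  qed
  ultimately show ?thesis
    by blast
qed

end
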